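(* For every triangle $ABC$ with $AB = AC$ and $AC > BC$ (i.e. $b = c > a$), the following triangle centers are at strictly increasing distances from vertex $A$, in this order (each listed center is strictly closer to $A$ than the next one): $$X_{20}, X_{22}, X_8, X_3, X_9, X_{10}, X_{21}, X_2, X_5, X_{12}, X_{17}, X_1, X_{13}, X_7, X_6, X_4, X_{27}, X_{19}, X_{28}, X_{25}, X_{11}, X_{14}, X_{16}, X_{23}.$$ Equivalently, in the isosceles order $\prec$, $X_{20}\prec X_{22}\prec X_8\prec X_3\prec X_9\prec X_{10}\prec X_{21}\prec X_2\prec X_5\prec X_{12}\prec X_{17}\prec X_1\prec X_{13}\prec X_7\prec X_6\prec X_4\prec X_{27}\prec X_{19}\prec X_{28}\prec X_{25}\prec X_{11}\prec X_{14}\prec X_{16}\prec X_{23}$.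
   Context: $X_n$ denotes the $n$-th triangle center listed in Kimberling's Encyclopedia of Triangle Centers (ETC), given there by its barycentric coordinates as functions of the side lengths $a=BC$, $b=CA$, $c=AB$. An isosceles triangle $ABC$ with base $BC$ (so $b=c$) is called tall if $b>a$. The isosceles order on triangle centers is defined by: $P\prec Q$ if $P$ is closer to $A$ than $Q$ in every tall isosceles triangle $ABC$ with base $BC$. *)

theory Defs
  imports "HOL-Analysis.Analysis"
begin

text \<open>Triangle centers from Kimberling's ETC, given by the first barycentric
coordinate f(a,b,c) as a function of the side lengths a = BC, b = CA, c = AB;
the full barycentrics are f(a,b,c) : f(b,c,a) : f(c,a,b).\<close>

definition tri_area :: "real \<Rightarrow> real \<Rightarrow> real \<Rightarrow> real" where
  "tri_area a b c = sqrt ((a+b+c) * (b+c-a) * (c+a-b) * (a+b-c)) / 4"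

definition X1 :: "real \<Rightarrow> real \<Rightarrow> real \<Rightarrow> real" where "X1 a b c = a"
definition X2 :: "real \<Rightarrow> real \<Rightarrow> real \<Rightarrow> real" where "X2 a b c = 1"
definition X3 :: "real \<Rightarrow> real \<Rightarrow> real \<Rightarrow> real" where "X3 a b c = a^2 * (b^2 + c^2 - a^2)"
definition X4 :: "real \<Rightarrow> real \<Rightarrow> real \<Rightarrow> real" where
  "X4 a b c = (a^2 + b^2 - c^2) * (a^2 - b^2 + c^2)"
definition X5 :: "real \<Rightarrow> real \<Rightarrow> real \<Rightarrow> real" where
  "X5 a b c = a^2 * (b^2 + c^2) - (b^2 - c^2)^2"
definition X6 :: "real \<Rightarrow> real \<Rightarrow> real \<Rightarrow> real" where "X6 a b c = a^2"
definition X7 :: "real \<Rightarrow> real \<Rightarrow> real \<Rightarrow> real" where "X7 a b c = 1 / (b + c - a)"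
definition X8 :: "real \<Rightarrow> real \<Rightarrow> real \<Rightarrow> real" where "X8 a b c = b + c - a"
definition X9 :: "real \<Rightarrow> real \<Rightarrow> real \<Rightarrow> real" where "X9 a b c = a * (b + c - a)"
definition X10 :: "real \<Rightarrow> real \<Rightarrow> real \<Rightarrow> real" where "X10 a b c = b + c"
definition X11 :: "real \<Rightarrow> real \<Rightarrow> real \<Rightarrow> real" where
  "X11 a b c = (b + c - a) * (b - c)^2"
definition X12 :: "real \<Rightarrow> real \<Rightarrow> real \<Rightarrow> real" where
  "X12 a b c = (b + c)^2 / (b + c - a)"
definition X13 :: "real \<Rightarrow> real \<Rightarrow> real \<Rightarrow> real" where
  "X13 a b c = a^4 - 2 * (b^2 - c^2)^2 + a^2 * (b^2 + c^2 + 4 * sqrt 3 * tri_area a b c)"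
definition X14 :: "real \<Rightarrow> real \<Rightarrow> real \<Rightarrow> real" where
  "X14 a b c = a^4 - 2 * (b^2 - c^2)^2 + a^2 * (b^2 + c^2 - 4 * sqrt 3 * tri_area a b c)"
definition X16 :: "real \<Rightarrow> real \<Rightarrow> real \<Rightarrow> real" where
  "X16 a b c = a^2 * (sqrt 3 * (a^2 - b^2 - c^2) + 4 * tri_area a b c)"
definition X17 :: "real \<Rightarrow> real \<Rightarrow> real \<Rightarrow> real" where
  "X17 a b c = 1 / (b^2 + c^2 - a^2 + 4 * sqrt 3 * tri_area a b c)"
definition X19 :: "real \<Rightarrow> real \<Rightarrow> real \<Rightarrow> real" where
  "X19 a b c = a / (b^2 + c^2 - a^2)"
definition X20 :: "real \<Rightarrow> real \<Rightarrow> real \<Rightarrow> real" where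
  "X20 a b c = 3 * a^4 - 2 * a^2 * (b^2 + c^2) - (b^2 - c^2)^2"
definition X21 :: "real \<Rightarrow> real \<Rightarrow> real \<Rightarrow> real" where
  "X21 a b c = a * (a + b) * (a + c) * (b + c - a)"
definition X22 :: "real \<Rightarrow> real \<Rightarrow> real \<Rightarrow> real" where
  "X22 a b c = a^2 * (b^4 + c^4 - a^4)"
definition X23 :: "real \<Rightarrow> real \<Rightarrow> real \<Rightarrow> real" where
  "X23 a b c = a^2 * (a^4 - b^4 - c^4 + b^2 * c^2)"
definition X25 :: "real \<Rightarrow> real \<Rightarrow> real \<Rightarrow> real" where
  "X25 a b c = a^2 / (b^2 + c^2 - a^2)"
definition X27 :: "real \<Rightarrow> real \<Rightarrow> real \<Rightarrow> real" where
  "X27 a b c = 1 / ((b + c) * (b^2 + c^2 - a^2))"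
definition X28 :: "real \<Rightarrow> real \<Rightarrow> real \<Rightarrow> real" where
  "X28 a b c = a / ((b + c) * (b^2 + c^2 - a^2))"

definition center :: "(real \<Rightarrow> real \<Rightarrow> real \<Rightarrow> real) \<Rightarrow> complex \<Rightarrow> complex \<Rightarrow> complex \<Rightarrow> complex" where
  "center f A B C =
     (let a = dist B C; b = dist C A; c = dist A B;
          u = f a b c; v = f b c a; w = f c a b
      in (of_real u * A + of_real v * B + of_real w * C) / of_real (u + v + w))"

end

(* When b = c, a center whose first barycentric coordinate is f has barycentrics
   u : v : v with u = f a b b and v = f b b a, so it lies on the median AM and
   A - P = t (A - M) with t = 2v / (u + 2v) = median_ratio f a b.  The distances to A
   are therefore ordered like these ratios t, which are explicit functions of a < b.
   Writing b = a + e, each comparison of consecutive ratios clears denominators to a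
   polynomial in a and e with positive coefficients.  The centers built from the area
   (X13, X14, X16, X17) involve the surd sqrt (3 (4 b^2 - a^2)) linearly, and the
   comparisons reduce to rational bounds on it, checked by squaring. *)

theory Submission
  imports Defs
begin

definition median_ratio :: "(real \<Rightarrow> real \<Rightarrow> real \<Rightarrow> real) \<Rightarrow> real \<Rightarrow> real \<Rightarrow> real" where
  "median_ratio f a b = 2 * f b b a / (f a b b + 2 * f b b a)"

lemma center_isosceles:
  fixes A B C :: complex
  assumes "dist A B = b" "dist C A = b" "dist B C = a"
    and "f b a b = f b b a" "f a b b + 2 * f b b a \<noteq> 0"
  shows "A - center f A B C = of_real (median_ratio f a b) * (A - (B + C) / 2)"
proof -
  define U where "U = (of_real (f a b b) :: complex)"
  define V where "V = (of_real (f b b a) :: complex)"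
  have "U + 2 * V = of_real (f a b b + 2 * f b b a)"
    by (simp add: U_def V_def)
  with assms(5) have nz: "U + 2 * V \<noteq> 0"
    by (metis of_real_eq_0_iff)
  have "A - center f A B C = A - (U * A + V * B + V * C) / (U + 2 * V)"
    using assms(1-4) by (simp add: center_def Let_def U_def V_def dist_commute add.commute)
  also have "\<dots> = 2 * V / (U + 2 * V) * (A - (B + C) / 2)"
    using nz by (simp add: eq_divide_eq divide_eq_eq algebra_simps)
  finally show ?thesis
    by (simp add: median_ratio_def U_def V_def)
qed

lemma dist_center_isosceles:
  fixes A B C :: complex
  assumes "dist A B = b" "dist C A = b" "dist B C = a"
    and "f b a b = f b b a" "0 < median_ratio f a b"
  shows "dist A (center f A B C) = median_ratio f a b * dist A ((B + C) / 2)"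
proof -
  \<comment> \<open>A vanishing denominator would make the ratio 0, since x / 0 = 0.\<close>
  from assms(5) have "f a b b + 2 * f b b a \<noteq> 0"
    by (auto simp: median_ratio_def)
  with assms show ?thesis
    using center_isosceles[of A B b C a f] by (simp add: dist_norm norm_mult)
qed

lemma dist_apex_midpoint_pos:
  fixes A B C :: complex
  assumes "dist A B > dist B C / 2"
  shows "dist A ((B + C) / 2) > 0"
proof -
  have "dist B ((B + C) / 2) = dist B C / 2"
    by (simp add: dist_norm field_simps norm_minus_commute)
  then show ?thesis
    using dist_triangle2[of A B "(B + C) / 2"] assms by linarith
qed

lemma tri_area_swap: "tri_area a c b = tri_area a b c"
  unfolding tri_area_def by (simp add: ac_simps)

definition isosceles_chain :: "(real \<Rightarrow> real \<Rightarrow> real \<Rightarrow> real) list" where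
  "isosceles_chain = [X20, X22, X8, X3, X9, X10, X21, X2, X5, X12, X17, X1, X13, X7, X6, X4,
                      X27, X19, X28, X25, X11, X14, X16, X23]"

lemma isosceles_chain_symmetric:
  assumes "f \<in> set isosceles_chain"
  shows "f x z y = f x y z"
  using assms unfolding isosceles_chain_def
  by (auto simp: X1_def X2_def X3_def X4_def X5_def X6_def X7_def X8_def X9_def X10_def X11_def
      X12_def X13_def X14_def X16_def X17_def X19_def X20_def X21_def X22_def X23_def X25_def
      X27_def X28_def tri_area_swap power2_commute algebra_simps)

lemma divide_cancel_common_factor:
  fixes c x y p q :: real
  assumes "c \<noteq> 0" "x = c * p" "y = c * q"
  shows "x / y = p / q"
  using assms by simp

lemma median_ratio_quotient:
  assumes "f \<equiv> (\<lambda>x y z. p x y z / q x y z)" "q a b b \<noteq> 0" "q b b a \<noteq> 0"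
  shows "median_ratio f a b =
    2 * p b b a * q a b b / (p a b b * q b b a + 2 * p b b a * q a b b)"
  unfolding median_ratio_def assms(1)
  by (rule divide_cancel_common_factor[where c = "1 / (q a b b * q b b a)"])
    (use assms(2,3) in \<open>simp_all add: field_simps\<close>)

lemma frac_less_frac_cross:
  fixes p q p' q' :: real
  assumes "0 < p' * q - p * q'" "0 < q" "0 < q'"
  shows "p / q < p' / q'"
  using assms by (simp add: divide_less_eq less_divide_eq algebra_simps)

lemma less_mult_sqrt:
  fixes p q d :: real
  assumes "0 \<le> q" "p^2 < q^2 * d"
  shows "p < q * sqrt d"
proof -
  have "p < sqrt (q^2 * d)"
    using assms(2) by (rule real_less_rsqrt)
  then show ?thesis
    using assms(1) by (simp add: real_sqrt_mult)
qed

lemma mult_sqrt_less: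
  fixes p q d :: real
  assumes "0 \<le> q" "0 \<le> p" "q^2 * d < p^2"
  shows "q * sqrt d < p"
proof -
  have "sqrt (q^2 * d) < p"
    using assms(2,3) by (rule real_less_lsqrt)
  then show ?thesis
    using assms(1) by (simp add: real_sqrt_mult)
qed

context
  fixes a b :: real
  assumes tall: "0 < a" "a < b"
begin

text \<open>\<rho> is 2 sqrt 3 times the altitude from A, so that 4 sqrt 3 times the area is a \<rho>.\<close>
abbreviation \<rho> where "\<rho> \<equiv> sqrt (3 * (4 * b^2 - a^2))"

lemma tall_pos:
  "0 < b^2 - a^2" "0 < 2*b^2 - a^2" "0 < 4*b^2 - a^2" "0 < \<rho>" "0 < a * \<rho>"
proof -
  have "a^2 < b^2" "0 < b^2"
    using tall by (simp_all add: power_strict_mono)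
  then show "0 < b^2 - a^2" "0 < 2*b^2 - a^2" "0 < 4*b^2 - a^2"
    using tall by linarith+
  then show "0 < \<rho>" "0 < a * \<rho>"
    using tall by simp_all
qed

lemma tri_area_isosceles:
  "4 * tri_area a b b = a * sqrt (4 * b^2 - a^2)"
  "4 * tri_area b b a = a * sqrt (4 * b^2 - a^2)"
proof -
  have "(a+b+b)*(b+b-a)*(b+a-b)*(a+b-b) = a^2 * (4*b^2-a^2)"
    "(b+b+a)*(b+a-b)*(a+b-b)*(b+b-a) = a^2 * (4*b^2-a^2)"
    by algebra+
  then show "4 * tri_area a b b = a * sqrt (4 * b^2 - a^2)"
    "4 * tri_area b b a = a * sqrt (4 * b^2 - a^2)"
    using tall by (simp_all add: tri_area_def real_sqrt_mult)
qed

lemma sqrt3_tri_area_isosceles: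
  "4 * sqrt 3 * tri_area a b b = a * \<rho>"
  "4 * sqrt 3 * tri_area b b a = a * \<rho>"
proof -
  have "\<rho> = sqrt 3 * sqrt (4 * b^2 - a^2)"
    by (simp only: real_sqrt_mult)
  then show "4 * sqrt 3 * tri_area a b b = a * \<rho>" "4 * sqrt 3 * tri_area b b a = a * \<rho>"
    using tri_area_isosceles by (simp_all add: ac_simps)
qed

lemma median_ratio_X20: "median_ratio X20 a b = 2*a^2 / (4*b^2 - a^2)"
  unfolding median_ratio_def X20_def
  by (rule divide_cancel_common_factor[where c = "-(a^2)"], use tall in simp,
      simp_all add: field_simps power2_eq_square power3_eq_cube power4_eq_xxxx)

lemma median_ratio_X22: "median_ratio X22 a b = 2*a^2*b^2 / (2*b^4 + 2*a^2*b^2 - a^4)"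
  unfolding median_ratio_def X22_def
  by (rule divide_cancel_common_factor[where c = "a^2"], use tall in simp,
      simp_all add: field_simps power2_eq_square power3_eq_cube power4_eq_xxxx)

lemma median_ratio_X8: "median_ratio X8 a b = 2*a / (2*b + a)"
  unfolding median_ratio_def X8_def
  by (rule divide_cancel_common_factor[where c = "1"], use tall in simp,
      simp_all add: field_simps power2_eq_square power3_eq_cube power4_eq_xxxx)

lemma median_ratio_X3: "median_ratio X3 a b = 2*b^2 / (4*b^2 - a^2)"
  unfolding median_ratio_def X3_def
  by (rule divide_cancel_common_factor[where c = "a^2"], use tall in simp,
      simp_all add: field_simps power2_eq_square power3_eq_cube power4_eq_xxxx)

lemma median_ratio_X9: "median_ratio X9 a b = 2*b / (4*b - a)"
  unfolding median_ratio_def X9_def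
  by (rule divide_cancel_common_factor[where c = "a"], use tall in simp,
      simp_all add: field_simps power2_eq_square power3_eq_cube power4_eq_xxxx)

lemma median_ratio_X10: "median_ratio X10 a b = (a + b) / (a + 2*b)"
  unfolding median_ratio_def X10_def
  by (rule divide_cancel_common_factor[where c = "2"], use tall in simp,
      simp_all add: field_simps power2_eq_square power3_eq_cube power4_eq_xxxx)

lemma median_ratio_X21: "median_ratio X21 a b = 4*b^2 / (6*b^2 + a*b - a^2)"
  unfolding median_ratio_def X21_def
  by (rule divide_cancel_common_factor[where c = "a*(a + b)"], use tall in simp,
      simp_all add: field_simps power2_eq_square power3_eq_cube power4_eq_xxxx)

lemma median_ratio_X2: "median_ratio X2 a b = 2 / 3"
  unfolding median_ratio_def X2_def
  by (rule divide_cancel_common_factor[where c = "1"], use tall in simp,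
      simp_all add: field_simps power2_eq_square power3_eq_cube power4_eq_xxxx)

lemma median_ratio_X5: "median_ratio X5 a b = (3*b^2 - a^2) / (4*b^2 - a^2)"
  unfolding median_ratio_def X5_def
  by (rule divide_cancel_common_factor[where c = "2*a^2"], use tall in simp,
      simp_all add: field_simps power2_eq_square power3_eq_cube power4_eq_xxxx)

lemma median_ratio_X12:
  "median_ratio X12 a b =
    2*(a + b)^2*(2*b - a) / (4*a*b^2 + 2*(a + b)^2*(2*b - a))"
  using median_ratio_quotient[where a = a and b = b, OF X12_def[abs_def]] tall tall_pos
  by (simp; simp add: algebra_simps power2_eq_square power3_eq_cube)

lemma median_ratio_X17:
  "median_ratio X17 a b =
    2*(2*b^2 - a^2 + a*\<rho>) / (4*b^2 - a^2 + 3*a*\<rho>)"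
proof -
  have "0 < 2*b^2 - a^2 + a*\<rho>" "0 < a^2 + a*\<rho>"
    by (intro add_pos_pos zero_less_power tall_pos tall)+
  then show ?thesis
    using median_ratio_quotient[where a = a and b = b, OF X17_def[abs_def]]
    by (simp add: sqrt3_tri_area_isosceles)
qed

lemma median_ratio_X1: "median_ratio X1 a b = 2*b / (a + 2*b)"
  unfolding median_ratio_def X1_def
  by (rule divide_cancel_common_factor[where c = "1"], use tall in simp,
      simp_all add: field_simps power2_eq_square power3_eq_cube power4_eq_xxxx)

lemma median_ratio_X13:
  "median_ratio X13 a b =
    2*(5*a*b^2 - 2*a^3 + b^2*\<rho>) / (3*a*(4*b^2 - a^2) + (a^2 + 2*b^2)*\<rho>)"
  unfolding median_ratio_def X13_def sqrt3_tri_area_isosceles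
  by (rule divide_cancel_common_factor[where c = "a"], use tall in simp,
      simp_all add: field_simps power2_eq_square power3_eq_cube power4_eq_xxxx)

lemma median_ratio_X7: "median_ratio X7 a b = 2*(2*b - a) / (4*b - a)"
  using median_ratio_quotient[where a = a and b = b, OF X7_def[abs_def]] tall tall_pos
  by (simp; simp add: algebra_simps power2_eq_square power3_eq_cube)

lemma median_ratio_X6: "median_ratio X6 a b = 2*b^2 / (a^2 + 2*b^2)"
  unfolding median_ratio_def X6_def
  by (rule divide_cancel_common_factor[where c = "1"], use tall in simp,
      simp_all add: field_simps power2_eq_square power3_eq_cube power4_eq_xxxx)

lemma median_ratio_X4: "median_ratio X4 a b = 2*(2*b^2 - a^2) / (4*b^2 - a^2)"
  unfolding median_ratio_def X4_def
  by (rule divide_cancel_common_factor[where c = "a^2"], use tall in simp,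
      simp_all add: field_simps power2_eq_square power3_eq_cube power4_eq_xxxx)

lemma median_ratio_X27:
  "median_ratio X27 a b =
    4*b*(2*b^2 - a^2) / (a^2*(a + b) + 4*b*(2*b^2 - a^2))"
  using median_ratio_quotient[where a = a and b = b, OF X27_def[abs_def]] tall tall_pos
  by (simp; simp add: algebra_simps power2_eq_square power3_eq_cube)

lemma median_ratio_X19: "median_ratio X19 a b = 2*b*(2*b^2 - a^2) / (a^3 + 2*b*(2*b^2 - a^2))"
  using median_ratio_quotient[where a = a and b = b, OF X19_def[abs_def]] tall tall_pos
  by (simp; simp add: algebra_simps power2_eq_square power3_eq_cube)

lemma median_ratio_X28:
  "median_ratio X28 a b =
    4*b^2*(2*b^2 - a^2) / (a^3*(a + b) + 4*b^2*(2*b^2 - a^2))"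
  using median_ratio_quotient[where a = a and b = b, OF X28_def[abs_def]] tall tall_pos
  by (simp; simp add: algebra_simps power2_eq_square power3_eq_cube)

lemma median_ratio_X25: "median_ratio X25 a b = 2*b^2*(2*b^2 - a^2) / (a^4 + 2*b^2*(2*b^2 - a^2))"
  using median_ratio_quotient[where a = a and b = b, OF X25_def[abs_def]] tall tall_pos
  by (simp; simp add: algebra_simps power2_eq_square power3_eq_cube)

lemma median_ratio_X11: "median_ratio X11 a b = 1"
  using tall by (simp add: median_ratio_def X11_def)

lemma median_ratio_X14:
  "median_ratio X14 a b =
    2*(b^2*\<rho> - 5*a*b^2 + 2*a^3) / ((a^2 + 2*b^2)*\<rho> - 3*a*(4*b^2 - a^2))"
  unfolding median_ratio_def X14_def sqrt3_tri_area_isosceles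
  by (rule divide_cancel_common_factor[where c = "-a"], use tall in simp,
      simp_all add: field_simps power2_eq_square power3_eq_cube power4_eq_xxxx)

lemma median_ratio_X16:
  "median_ratio X16 a b =
    2*b^2*(\<rho> - 3*a) / ((a^2 + 2*b^2)*\<rho> - 3*a*(4*b^2 - a^2))"
  unfolding median_ratio_def X16_def tri_area_isosceles real_sqrt_mult
  by (rule divide_cancel_common_factor[where c = "a / sqrt 3"], use tall in simp,
      simp_all add: field_simps power2_eq_square)

lemma median_ratio_X23: "median_ratio X23 a b = 2*b^2 / (b^2 - a^2)"
  unfolding median_ratio_def X23_def
  by (rule divide_cancel_common_factor[where c = "a^2*(b^2 - a^2)"], use tall in simp,
      simp_all add: field_simps power2_eq_square power3_eq_cube power4_eq_xxxx)

text \<open>After substituting b = a + e, every polynomial inequality needed below expands to a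
  polynomial in a and e with positive coefficients, which simp then closes.\<close>
lemma tall_excess:
  obtains e where "b = a + e" "0 < e"
  using tall by (intro that[of "b - a"]) simp_all

lemma X14_denominator_pos: "0 < (a^2 + 2*b^2)*\<rho> - 3*a*(4*b^2 - a^2)"
proof -
  have "3*a*(4*b^2 - a^2) < (a^2 + 2*b^2) * \<rho>"
    by (rule less_mult_sqrt;
        rule tall_excess; use tall in \<open>simp add: algebra_simps power_numeral_reduce add_pos_pos\<close>)
  then show ?thesis
    by simp
qed

lemma X17_denominator_pos: "0 < 4*b^2 - a^2 + 3*a*\<rho>"
  using tall_pos by simp

lemma median_ratio_X12_less_X17: "median_ratio X12 a b < median_ratio X17 a b"
proof -
  have "(a^2 + a*b + 2*b^2) * \<rho> < 8*b^3 + 6*a*b^2 - a^2*b - a^3"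
    by (rule mult_sqrt_less;
        rule tall_excess; use tall in \<open>simp add: algebra_simps power_numeral_reduce add_pos_pos\<close>)
  then have "0 < 2*a*(b - a)*(8*b^3 + 6*a*b^2 - a^2*b - a^3 - (a^2 + a*b + 2*b^2) * \<rho>)"
    using tall by simp
  also have "\<dots> = 2*(2*b^2 - a^2 + a*\<rho>) * (4*a*b^2 + 2*(a + b)^2*(2*b - a))
      - 2*(a + b)^2*(2*b - a) * (4*b^2 - a^2 + 3*a*\<rho>)"
    by (simp add: algebra_simps power2_eq_square power3_eq_cube)
  finally show ?thesis
    unfolding median_ratio_X12 median_ratio_X17
    by (rule frac_less_frac_cross[OF _ _ X17_denominator_pos])
      (rule tall_excess; use tall in \<open>simp add: algebra_simps power_numeral_reduce add_pos_pos\<close>)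
qed

lemma median_ratio_X17_less_X1: "median_ratio X17 a b < median_ratio X1 a b"
proof -
  have "a + 2*b < \<rho>"
    by (rule real_less_rsqrt;
        rule tall_excess; use tall in \<open>simp add: algebra_simps power_numeral_reduce add_pos_pos\<close>)
  then have "0 < 2*a*(b - a)*(\<rho> - (a + 2*b))"
    using tall by simp
  also have "\<dots> = 2*b*(4*b^2 - a^2 + 3*a*\<rho>) - 2*(2*b^2 - a^2 + a*\<rho>)*(a + 2*b)"
    by (simp add: algebra_simps power2_eq_square)
  finally show ?thesis
    unfolding median_ratio_X17 median_ratio_X1
    by (rule frac_less_frac_cross) (use X17_denominator_pos tall in simp_all)
qed

lemma median_ratio_X1_less_X13: "median_ratio X1 a b < median_ratio X13 a b"
proof -
  have "(2*b + a)*(b - 2*a) < b * \<rho>"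
    by (rule less_mult_sqrt;
        rule tall_excess; use tall in \<open>simp add: algebra_simps power_numeral_reduce add_pos_pos\<close>)
  then have "0 < 2*a*(b - a)*(b * \<rho> - (2*b + a)*(b - 2*a))"
    using tall by simp
  also have "\<dots> = 2*(5*a*b^2 - 2*a^3 + b^2*\<rho>)*(a + 2*b)
      - 2*b*(3*a*(4*b^2 - a^2) + (a^2 + 2*b^2)*\<rho>)"
    by (simp add: algebra_simps power2_eq_square power3_eq_cube)
  finally show ?thesis
    unfolding median_ratio_X1 median_ratio_X13
    by (rule frac_less_frac_cross) (use tall_pos tall in \<open>simp_all add: add_pos_pos\<close>)
qed

lemma median_ratio_X13_less_X7: "median_ratio X13 a b < median_ratio X7 a b"
proof -
  have "\<rho> < 4*b + a"
    by (rule real_less_lsqrt;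
        rule tall_excess; use tall in \<open>simp add: algebra_simps power_numeral_reduce add_pos_pos\<close>)
  then have "0 < 2*a*(b - a)^2*(4*b + a - \<rho>)"
    using tall by simp
  also have "\<dots> = 2*(2*b - a)*(3*a*(4*b^2 - a^2) + (a^2 + 2*b^2)*\<rho>)
      - 2*(5*a*b^2 - 2*a^3 + b^2*\<rho>)*(4*b - a)"
    by (simp add: algebra_simps power2_eq_square power3_eq_cube)
  finally show ?thesis
    unfolding median_ratio_X13 median_ratio_X7
    by (rule frac_less_frac_cross) (use tall_pos tall in \<open>simp_all add: add_pos_pos\<close>)
qed

lemma median_ratio_X11_less_X14: "median_ratio X11 a b < median_ratio X14 a b"
proof -
  have "a * \<rho> < a^2 + 2*b^2"
    by (rule mult_sqrt_less;
        rule tall_excess; use tall in \<open>simp add: algebra_simps power_numeral_reduce add_pos_pos\<close>)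
  then have "0 < a*(a^2 + 2*b^2 - a*\<rho>)"
    using tall by simp
  also have "\<dots> = 2*(b^2*\<rho> - 5*a*b^2 + 2*a^3)
      - ((a^2 + 2*b^2)*\<rho> - 3*a*(4*b^2 - a^2))"
    by (simp add: algebra_simps power2_eq_square power3_eq_cube)
  finally show ?thesis
    unfolding median_ratio_X11 median_ratio_X14
    using X14_denominator_pos by (simp add: less_divide_eq_1_pos)
qed

lemma median_ratio_X14_less_X16: "median_ratio X14 a b < median_ratio X16 a b"
proof -
  have "2*(b^2*\<rho> - 5*a*b^2 + 2*a^3) < 2*b^2*(\<rho> - 3*a)"
    using tall_pos tall by (simp add: algebra_simps power2_eq_square power3_eq_cube)
  then show ?thesis
    unfolding median_ratio_X14 median_ratio_X16
    using X14_denominator_pos by (rule divide_strict_right_mono)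
qed

lemma median_ratio_X16_less_X23: "median_ratio X16 a b < median_ratio X23 a b"
proof -
  have "9*a*b^2 < (2*a^2 + b^2) * \<rho>"
    by (rule less_mult_sqrt;
        rule tall_excess; use tall in \<open>simp add: algebra_simps power_numeral_reduce add_pos_pos\<close>)
  then have "0 < 2*b^2*((2*a^2 + b^2) * \<rho> - 9*a*b^2)"
    using tall by simp
  also have "\<dots> = 2*b^2*((a^2 + 2*b^2)*\<rho> - 3*a*(4*b^2 - a^2))
      - 2*b^2*(\<rho> - 3*a)*(b^2 - a^2)"
    by (simp add: algebra_simps power2_eq_square power3_eq_cube)
  finally show ?thesis
    unfolding median_ratio_X16 median_ratio_X23
    by (rule frac_less_frac_cross) (use X14_denominator_pos tall_pos in simp_all)
qed

lemma median_ratios_sorted: "sorted_wrt (<) (0 # map (\<lambda>f. median_ratio f a b) isosceles_chain)"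
  unfolding isosceles_chain_def list.map sorted_wrt2[OF transp_on_less] sorted_wrt1
  unfolding median_ratio_X12_less_X17[THEN eqTrueI] median_ratio_X17_less_X1[THEN eqTrueI]
    median_ratio_X1_less_X13[THEN eqTrueI] median_ratio_X13_less_X7[THEN eqTrueI]
    median_ratio_X11_less_X14[THEN eqTrueI] median_ratio_X14_less_X16[THEN eqTrueI]
    median_ratio_X16_less_X23[THEN eqTrueI] simp_thms
  unfolding median_ratio_X20 median_ratio_X22 median_ratio_X8 median_ratio_X3 median_ratio_X9
    median_ratio_X10 median_ratio_X21 median_ratio_X2 median_ratio_X5 median_ratio_X12
    median_ratio_X7 median_ratio_X6 median_ratio_X4 median_ratio_X27 median_ratio_X19
    median_ratio_X28 median_ratio_X25 median_ratio_X11
  by (rule tall_excess) (use tall in \<open>intro conjI frac_less_frac_cross;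
      simp add: algebra_simps power_numeral_reduce add_pos_pos divide_less_eq_1_pos\<close>)

end

theorem theorem3p1:
  fixes A B C :: complex
  assumes "B \<noteq> C"
    and "dist A B = dist A C"
    and "dist A C > dist B C"
  shows "sorted_wrt (<) (map (\<lambda>f. dist A (center f A B C))
           [X20, X22, X8, X3, X9, X10, X21, X2, X5, X12, X17, X1, X13, X7, X6, X4,
            X27, X19, X28, X25, X11, X14, X16, X23])"
proof -
  define a b where "a = dist B C" and "b = dist A C"
  have tall: "0 < a" "a < b" and sides: "dist A B = b" "dist C A = b" "dist B C = a"
    using assms by (simp_all add: a_def b_def dist_commute)
  define h where "h = dist A ((B + C) / 2)"
  have "0 < h"
    unfolding h_def using sides tall by (intro dist_apex_midpoint_pos) simp
  let ?t = "\<lambda>f. median_ratio f a b"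
  have pos: "\<forall>f \<in> set isosceles_chain. 0 < ?t f"
    and sorted: "sorted_wrt (<) (map ?t isosceles_chain)"
    using median_ratios_sorted[OF tall] by simp_all
  have "dist A (center f A B C) = ?t f * h" if "f \<in> set isosceles_chain" for f
    unfolding h_def using sides isosceles_chain_symmetric[OF that] pos that
    by (intro dist_center_isosceles) auto
  then have "map (\<lambda>f. dist A (center f A B C)) isosceles_chain =
      map (\<lambda>f. ?t f * h) isosceles_chain"
    by simp
  moreover have "sorted_wrt (<) (map (\<lambda>f. ?t f * h) isosceles_chain)"
    using sorted \<open>0 < h\<close> by (simp add: sorted_wrt_map)
  ultimately show ?thesis
    unfolding isosceles_chain_def[symmetric] by (simp only:)
qed

end
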